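(* Let $I=(I_1,\dots,I_d)\in \mathcal I_d$ and $r,s\in [5]$ with $r\neq s$. Assume that the letter $r$ appears exactly once in each of $I_1,\ldots,I_c$ and does not appear in $I_{c+1},\ldots,I_{d}$. Then, for the adjoint action of $L_0$ on $U_-$, $x_s\partial _r. \omega_I=\sum_{b=1}^c \omega_{I^{b,s,r}}$, where $I^{b,s,r}$ is obtained from $I$ by replacing the letter $r$ in $I_b$ by $s$.
   Context: $L=E(5,10)$: even part the divergence-free formal vector fields in $x_1,\dots,x_5$, odd part the closed formal 2-forms; $d_{ij}=dx_i\wedge dx_j$ ($d_{ji}=-d_{ij}$, $d_{ii}=0$), and $[f d_{ij},g d_{kl}]=\varepsilon_{ijkl}fg\partial_{t_{ijkl}}$, where if $|\{i,j,k,l\}|=4$, $t_{ijkl}$ is the fifth element of $[5]$ and $\varepsilon_{ijkl}$ the sign of the permutation $(i,j,k,l,t_{ijkl})$, otherwise $\varepsilon_{ijkl}=0$. $L_0\cong\mathfrak{sl}_5$ is spanned by $x_i\partial_j$ ($i\ne j$) and $x_i\partial_i-x_j\partial_j$, and acts on $U_-=U(L_-)$, $L_-=\langle\partial_i\rangle\oplus\langle d_{ij}\rangle$, by the adjoint action $x.u=xu-ux$ (computed in $U(L)$). $\mathcal I_d$ is the set of $d$-tuples $I=(I_1,\dots,I_d)$ of ordered pairs $I_l=(i_l,j_l)\in[5]^2$; $d_I=d_{i_1j_1}\cdots d_{i_dj_d}$. For $k\neq l$ in $[d]$, $D_{\{k,l\}}(I)=\tfrac12(-1)^{k+l}\varepsilon_{i_kj_ki_lj_l}\partial_{t_{i_kj_ki_lj_l}}$.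 $\mathrm{SIF}_d$ is the set of sets $S$ of pairwise disjoint 2-element subsets of $[d]$; two disjoint pairs $\{k,l\},\{h,m\}$ cross if exactly one of $k,l$ is strictly between $h$ and $m$; $c(S)$ is the number of crossing pairs in $S$. $D_S(I)=\prod_{P\in S}D_P(I)$ ($D_\emptyset=1$), $C_S(I)$ is $I$ with all $I_j$, $j\in\bigcup S$, deleted, and $\omega_I=\sum_{S\in \mathrm{SIF}_d}(-1)^{c(S)}D_S(I)\,d_{C_S(I)}\in U_-$. *)

theory Defs
  imports "HOL-Library.Poly_Mapping" "HOL-Combinatorics.Permutations"
begin

text \<open>Generators of L_-: Pd i is the even element partial_i, Dd i j is the odd
element d_ij = dx_i wedge dx_j.  Indices live in [5] = {1..5}.\<close>

datatype gen = Pd nat | Dd nat nat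

type_synonym 'k fa = "gen list \<Rightarrow>\<^sub>0 'k"

definition fa_mult :: "'k::comm_ring_1 fa \<Rightarrow> 'k fa \<Rightarrow> 'k fa" where
  "fa_mult p q = (\<Sum>u\<in>Poly_Mapping.keys p. \<Sum>v\<in>Poly_Mapping.keys q.
       Poly_Mapping.single (u @ v) (Poly_Mapping.lookup p u * Poly_Mapping.lookup q v))"

definition fa_one :: "'k::comm_ring_1 fa" where
  "fa_one = Poly_Mapping.single [] 1"

definition fa_smul :: "'k::comm_ring_1 \<Rightarrow> 'k fa \<Rightarrow> 'k fa" where
  "fa_smul c p = Poly_Mapping.map (\<lambda>x. c * x) p"

definition fa_gen :: "gen \<Rightarrow> 'k::comm_ring_1 fa" where
  "fa_gen g = Poly_Mapping.single [g] 1"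

definition fa_word :: "gen list \<Rightarrow> 'k::comm_ring_1 fa" where
  "fa_word w = Poly_Mapping.single w 1"

definition five :: "nat set" where "five = {1..5}"

definition tcomp :: "nat \<Rightarrow> nat \<Rightarrow> nat \<Rightarrow> nat \<Rightarrow> nat" where
  "tcomp i j k l = (THE t. t \<in> five - {i, j, k, l})"

definition eps :: "nat \<Rightarrow> nat \<Rightarrow> nat \<Rightarrow> nat \<Rightarrow> int" where
  "eps i j k l = (if {i, j, k, l} \<subseteq> five \<and> card {i, j, k, l} = 4 then
     sign (\<lambda>n. if n = 1 then i else if n = 2 then j else if n = 3 then k
               else if n = 4 then l else if n = 5 then tcomp i j k l else n)
   else 0)"

text \<open>Defining relations of U(L_-): partial's are central (commute with everything),
  d_ij d_kl + d_kl d_ij = [d_ij, d_kl] = eps_{ijkl} partial_{t_{ijkl}},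
  d_ji = - d_ij, d_ii = 0.\<close>
definition rels :: "'k::comm_ring_1 fa set" where
  "rels =
     {fa_mult (fa_gen (Pd i)) (fa_gen g) - fa_mult (fa_gen g) (fa_gen (Pd i)) | i g.
        i \<in> five \<and> (case g of Pd j \<Rightarrow> j \<in> five | Dd j k \<Rightarrow> j \<in> five \<and> k \<in> five)}
   \<union> {fa_mult (fa_gen (Dd i j)) (fa_gen (Dd k l)) + fa_mult (fa_gen (Dd k l)) (fa_gen (Dd i j))
        - fa_smul (of_int (eps i j k l)) (fa_gen (Pd (tcomp i j k l))) | i j k l.
        i \<in> five \<and> j \<in> five \<and> k \<in> five \<and> l \<in> five}
   \<union> {fa_gen (Dd i j) + fa_gen (Dd j i) | i j. i \<in> five \<and> j \<in> five}
   \<union> {fa_gen (Dd i i) | i. i \<in> five}"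

inductive_set rel_ideal :: "'k::comm_ring_1 fa set" where
  zero: "0 \<in> rel_ideal"
| gen: "r \<in> rels \<Longrightarrow> fa_mult (fa_mult a r) b \<in> rel_ideal"
| add: "x \<in> rel_ideal \<Longrightarrow> y \<in> rel_ideal \<Longrightarrow> x + y \<in> rel_ideal"

definition ueq :: "'k::comm_ring_1 fa \<Rightarrow> 'k fa \<Rightarrow> bool" where
  "ueq p q \<longleftrightarrow> p - q \<in> rel_ideal"

text \<open>On generators: [x_s d_r, partial_i] = - delta_{is} partial_r and
  [x_s d_r, d_ij] = delta_{ri} d_{sj} + delta_{rj} d_{is}; extended to U_- as an
  (even) derivation, which is what u \<mapsto> xu - ux in U(L) restricts to.\<close>
definition act_gen :: "nat \<Rightarrow> nat \<Rightarrow> gen \<Rightarrow> 'k::comm_ring_1 fa" where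
  "act_gen s r g = (case g of
      Pd i \<Rightarrow> (if i = s then - fa_gen (Pd r) else 0)
    | Dd i j \<Rightarrow> (if i = r then fa_gen (Dd s j) else 0) + (if j = r then fa_gen (Dd i s) else 0))"

definition act_word :: "nat \<Rightarrow> nat \<Rightarrow> gen list \<Rightarrow> 'k::comm_ring_1 fa" where
  "act_word s r w = (\<Sum>k<length w.
      fa_mult (fa_mult (fa_word (take k w)) (act_gen s r (w ! k))) (fa_word (drop (Suc k) w)))"

definition act :: "nat \<Rightarrow> nat \<Rightarrow> 'k::comm_ring_1 fa \<Rightarrow> 'k fa" where
  "act s r p = (\<Sum>w\<in>Poly_Mapping.keys p. fa_smul (Poly_Mapping.lookup p w) (act_word s r w))"

text \<open>I \<in> I_d is a list of d ordered pairs; I_l is I ! (l - 1) for l \<in> [d].\<close>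

definition dI :: "(nat \<times> nat) list \<Rightarrow> 'k::comm_ring_1 fa" where
  "dI I = fa_word (map (\<lambda>(i, j). Dd i j) I)"

definition SIF :: "nat \<Rightarrow> nat set set set" where
  "SIF d = {S. (\<forall>P\<in>S. P \<subseteq> {1..d} \<and> card P = 2) \<and>
               (\<forall>P\<in>S. \<forall>Q\<in>S. P \<noteq> Q \<longrightarrow> P \<inter> Q = {})}"

definition crosses :: "nat set \<Rightarrow> nat set \<Rightarrow> bool" where
  "crosses P Q \<longleftrightarrow> card (P \<inter> {Min Q<..<Max Q}) = 1"

definition ncross :: "nat set set \<Rightarrow> nat" where
  "ncross S = card {{P, Q} | P Q. P \<in> S \<and> Q \<in> S \<and> P \<noteq> Q \<and> P \<inter> Q = {} \<and> crosses P Q}"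

text \<open>D_{k,l}(I) for k < l (the expression is symmetric in k, l).\<close>
definition Dpair :: "(nat \<times> nat) list \<Rightarrow> nat \<Rightarrow> nat \<Rightarrow> 'k::field fa" where
  "Dpair I k l = (let (ik, jk) = I ! (k - 1); (il, jl) = I ! (l - 1) in
     fa_smul ((1 / 2) * (-1) ^ (k + l) * of_int (eps ik jk il jl))
             (fa_gen (Pd (tcomp ik jk il jl))))"

text \<open>D_S(I) = product of the D_P(I), P \<in> S, taken in the order of the smaller
  elements of the pairs (the factors commute in U_-).\<close>
definition DS :: "(nat \<times> nat) list \<Rightarrow> nat set set \<Rightarrow> 'k::field fa" where
  "DS I S = foldr fa_mult
     (map (\<lambda>k. let P = (THE P. P \<in> S \<and> Min P = k) in Dpair I (Min P) (Max P))
          (sorted_list_of_set (Min ` S)))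
     fa_one"

definition CS :: "(nat \<times> nat) list \<Rightarrow> nat set set \<Rightarrow> (nat \<times> nat) list" where
  "CS I S = map (\<lambda>k. I ! (k - 1)) (filter (\<lambda>k. k \<notin> \<Union>S) [1..<Suc (length I)])"

definition omega :: "(nat \<times> nat) list \<Rightarrow> 'k::field fa" where
  "omega I = (\<Sum>S\<in>SIF (length I). fa_smul ((-1) ^ ncross S) (fa_mult (DS I S) (dI (CS I S))))"

definition repl :: "(nat \<times> nat) list \<Rightarrow> nat \<Rightarrow> nat \<Rightarrow> nat \<Rightarrow> (nat \<times> nat) list" where
  "repl I b s r = I[b - 1 := (let (i, j) = I ! (b - 1) in
       (if i = r then s else i, if j = r then s else j))]"

end

theory Submission
  imports Defs
begin

text \<open>
  The action of x_s partial_r on the free associative algebra on L_- is a derivation, and the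
  identity holds there already, hence also in U_-.  Each summand D_S(I) d_{C_S(I)} of omega_I is a
  product of factors attached to disjoint blocks of positions of I: a pair {k, l} of S carries
  D_{k,l}(I), a position k outside the union of S carries d_{I_k}.  By the Leibniz rule the action
  hits one factor at a time, and on the factor of a block B it yields the sum, over the b in B
  with b <= c, of the same factor built from I^{b,s,r}.  For d_{I_k} this is immediate; for
  D_{k,l}(I), a multiple of eps partial_t, it is a case analysis on how many of I_k, I_l contain r,
  resting on the fact that exchanging the letters r and s changes the sign of eps and exchanges
  them in t.  Since I^{b,s,r} differs from I only at position b, the other factors are unchanged,
  and summing over S gives the theorem.
\<close>

section \<open>The free associative algebra and the derivation x_s partial_r\<close>

text \<open>Concatenation makes lists the free monoid, so that \<open>'k fa\<close> becomes its monoid algebra,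
  i.e. the free associative algebra, whose product is \<open>fa_mult\<close>.\<close>

instantiation list :: (type) monoid_add
begin
definition zero_list :: "'a list" where "zero_list = []"
definition plus_list :: "'a list \<Rightarrow> 'a list \<Rightarrow> 'a list" where "plus_list u v = u @ v"
instance by standard (auto simp: zero_list_def plus_list_def)
end

lemma poly_mapping_sum_single:
  "(p :: 'a \<Rightarrow>\<^sub>0 'b::comm_monoid_add) =
     (\<Sum>w\<in>Poly_Mapping.keys p. Poly_Mapping.single w (Poly_Mapping.lookup p w))"
proof (rule poly_mapping_eqI)
  fix k
  show "Poly_Mapping.lookup p k =
      Poly_Mapping.lookup (\<Sum>w\<in>Poly_Mapping.keys p. Poly_Mapping.single w (Poly_Mapping.lookup p w)) k"
    unfolding lookup_sum lookup_single
    by (cases "k \<in> Poly_Mapping.keys p") (auto simp: when_def in_keys_iff)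
qed

lemma fa_mult_eq_times: "fa_mult p q = p * q"
proof -
  have "p * q = (\<Sum>u\<in>Poly_Mapping.keys p. Poly_Mapping.single u (Poly_Mapping.lookup p u)) *
     (\<Sum>v\<in>Poly_Mapping.keys q. Poly_Mapping.single v (Poly_Mapping.lookup q v))"
    by (subst poly_mapping_sum_single[of p], subst poly_mapping_sum_single[of q]) (rule refl)
  also have "\<dots> = fa_mult p q"
    unfolding fa_mult_def sum_distrib_left sum_distrib_right mult_single plus_list_def
    by (rule sum.swap)
  finally show ?thesis by simp
qed

definition fa_const :: "'k::comm_ring_1 \<Rightarrow> 'k fa" where
  "fa_const c = Poly_Mapping.single [] c"

lemma fa_const_0 [simp]: "fa_const 0 = 0"
  by (simp add: fa_const_def)

lemma fa_const_1 [simp]: "fa_const 1 = 1"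
  by (simp add: fa_const_def flip: zero_list_def)

lemma fa_const_add: "fa_const (a + b) = fa_const a + fa_const b"
  by (simp add: fa_const_def single_add)

lemma fa_const_uminus: "fa_const (- a) = - fa_const a"
  by (simp add: fa_const_def single_uminus)

lemma fa_const_mult: "fa_const a * fa_const b = fa_const (a * b)"
  by (simp add: fa_const_def mult_single plus_list_def)

lemma fa_smul_eq_const_times: "fa_smul c p = fa_const c * p"
  unfolding fa_smul_def fa_const_def using mult_map_scale_conv_mult[of c p]
  by (simp add: zero_list_def)

lemma fa_one_eq_one: "fa_one = 1"
  unfolding fa_one_def by (metis single_one zero_list_def)

lemma fa_word_Nil: "fa_word [] = 1"
  unfolding fa_word_def by (metis single_one zero_list_def)

lemma fa_word_append: "fa_word (u @ v) = fa_word u * fa_word v"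
  unfolding fa_word_def mult_single by (simp add: plus_list_def)

lemma fa_word_Cons: "fa_word (g # w) = fa_gen g * fa_word w"
  using fa_word_append[of "[g]" w] by (simp add: fa_gen_def fa_word_def)

lemma fa_word_eq_prod_list: "fa_word w = prod_list (map fa_gen w)"
  by (induction w) (simp_all add: fa_word_Nil fa_word_Cons)

lemma single_eq_const_times_word: "Poly_Mapping.single w c = fa_const c * fa_word w"
  unfolding fa_const_def fa_word_def mult_single by (simp add: plus_list_def)

lemma fa_const_commute: "fa_const c * p = p * fa_const c"
proof -
  have "fa_const c * p =
      (\<Sum>w\<in>Poly_Mapping.keys p. fa_const c * Poly_Mapping.single w (Poly_Mapping.lookup p w))"
    by (subst poly_mapping_sum_single[of p]) (simp add: sum_distrib_left)
  also have "\<dots> = (\<Sum>w\<in>Poly_Mapping.keys p. Poly_Mapping.single w (Poly_Mapping.lookup p w) * fa_const c)"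
    by (rule sum.cong) (auto simp: fa_const_def mult_single plus_list_def mult.commute)
  also have "\<dots> = p * fa_const c"
    by (subst (2) poly_mapping_sum_single[of p]) (simp add: sum_distrib_right)
  finally show ?thesis .
qed

lemma lookup_const_times: "Poly_Mapping.lookup (fa_const c * p) w = c * Poly_Mapping.lookup p w"
  unfolding fa_smul_eq_const_times[symmetric] fa_smul_def by transfer (auto simp: when_def)

lemma act_eq_sum_superset:
  assumes "finite W" "Poly_Mapping.keys p \<subseteq> W"
  shows "act s r p = (\<Sum>w\<in>W. fa_const (Poly_Mapping.lookup p w) * act_word s r w)"
  unfolding act_def fa_smul_eq_const_times
  by (rule sum.mono_neutral_left) (use assms in \<open>auto simp: in_keys_iff\<close>)

lemma act_add: "act s r (p + q) = act s r p + act s r q"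
  by (simp add: act_eq_sum_superset[of "Poly_Mapping.keys p \<union> Poly_Mapping.keys q"] keys_add
      lookup_add fa_const_add distrib_right sum.distrib)

lemma act_zero [simp]: "act s r 0 = 0"
  by (simp add: act_def)

lemma act_sum: "act s r (\<Sum>i\<in>A. f i) = (\<Sum>i\<in>A. act s r (f i))"
  by (induction A rule: infinite_finite_induct) (auto simp: act_add)

lemma act_const_times: "act s r (fa_const c * p) = fa_const c * act s r p"
proof -
  have "Poly_Mapping.keys (fa_const c * p) \<subseteq> Poly_Mapping.keys p"
    by (auto simp: in_keys_iff lookup_const_times)
  then show ?thesis
    by (simp add: act_eq_sum_superset[of "Poly_Mapping.keys p"] lookup_const_times
        fa_const_mult[symmetric] sum_distrib_left mult.assoc)
qed

lemma act_single: "act s r (Poly_Mapping.single w c) = fa_const c * act_word s r w"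
  by (subst act_eq_sum_superset[of "{w}"]) (auto simp: lookup_single)

lemma act_word_Cons:
  "act_word s r (g # w) = act_gen s r g * fa_word w + fa_gen g * act_word s r w"
  unfolding act_word_def fa_mult_eq_times length_Cons sum.lessThan_Suc_shift
  by (simp add: fa_word_Nil fa_word_Cons sum_distrib_left mult.assoc)

lemma act_word_append:
  "act_word s r (u @ v) = act_word s r u * fa_word v + fa_word u * act_word s r v"
proof (induction u)
  case Nil
  show ?case by (simp add: act_word_def fa_word_Nil)
next
  case (Cons g u)
  then show ?case by (simp add: act_word_Cons fa_word_Cons fa_word_append algebra_simps)
qed

lemma act_fa_word: "act s r (fa_word w) = act_word s r w"
  unfolding fa_word_def act_single by simp

lemma act_fa_gen: "act s r (fa_gen g) = act_gen s r g"
  unfolding fa_gen_def act_single by (simp add: act_word_def fa_mult_eq_times fa_word_Nil)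

lemma const_times_const_times:
  "(fa_const a * x) * (fa_const b * y) = fa_const (a * b) * (x * y)"
  by (metis fa_const_commute fa_const_mult mult.assoc)

lemma act_times: "act s r (p * q) = act s r p * q + p * act s r q"
proof -
  let ?P = "Poly_Mapping.keys p" and ?a = "Poly_Mapping.lookup p"
  let ?Q = "Poly_Mapping.keys q" and ?b = "Poly_Mapping.lookup q"
  have p: "p = (\<Sum>u\<in>?P. fa_const (?a u) * fa_word u)"
    using poly_mapping_sum_single[of p] by (simp add: single_eq_const_times_word)
  have q: "q = (\<Sum>v\<in>?Q. fa_const (?b v) * fa_word v)"
    using poly_mapping_sum_single[of q] by (simp add: single_eq_const_times_word)
  have act_p: "act s r p = (\<Sum>u\<in>?P. fa_const (?a u) * act s r (fa_word u))"
    and act_q: "act s r q = (\<Sum>v\<in>?Q. fa_const (?b v) * act s r (fa_word v))"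
    unfolding act_fa_word by (simp_all add: act_def fa_smul_eq_const_times)
  have "act s r (p * q) =
      act s r (\<Sum>v\<in>?Q. \<Sum>u\<in>?P. fa_const (?a u * ?b v) * (fa_word u * fa_word v))"
    using arg_cong2[where f = "(*)", OF p q]
    by (simp add: sum_distrib_left sum_distrib_right const_times_const_times)
  also have "\<dots> = (\<Sum>v\<in>?Q. \<Sum>u\<in>?P. fa_const (?a u * ?b v) *
      (act s r (fa_word u) * fa_word v + fa_word u * act s r (fa_word v)))"
    by (simp add: act_sum act_const_times act_fa_word act_word_append flip: fa_word_append)
  also have "\<dots> = (\<Sum>u\<in>?P. fa_const (?a u) * act s r (fa_word u)) * (\<Sum>v\<in>?Q. fa_const (?b v) * fa_word v)
      + (\<Sum>u\<in>?P. fa_const (?a u) * fa_word u) * (\<Sum>v\<in>?Q. fa_const (?b v) * act s r (fa_word v))"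
    by (simp add: sum_distrib_left sum_distrib_right const_times_const_times distrib_left sum.distrib)
  also have "\<dots> = act s r p * q + p * act s r q"
    using act_p act_q p q by simp
  finally show ?thesis .
qed

text \<open>The factors \<open>F0 B\<close> sit on disjoint blocks \<open>B\<close> of positions; \<open>F b\<close> are the factors after
  modifying position \<open>b\<close>, which changes only the factor whose block contains \<open>b\<close>.\<close>

lemma derivation_prod_list_blocks:
  fixes D :: "'a::ring_1 \<Rightarrow> 'a" and F :: "'b \<Rightarrow> 'b list \<Rightarrow> 'a"
  assumes leibniz: "\<And>x y. D (x * y) = D x * y + x * D y"
    and "finite A"
    and "distinct (concat Bs)"
    and "\<And>B. B \<in> set Bs \<Longrightarrow> D (F0 B) = (\<Sum>b\<in>set B \<inter> A. F b B)"
    and "\<And>B b. B \<in> set Bs \<Longrightarrow> b \<in> A \<Longrightarrow> b \<notin> set B \<Longrightarrow> F b B = F0 B"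
  shows "D (prod_list (map F0 Bs)) = (\<Sum>b\<in>set (concat Bs) \<inter> A. prod_list (map (F b) Bs))"
  using assms(3-5)
proof (induction Bs)
  case Nil
  then show ?case using leibniz[of 1 1] by simp
next
  case (Cons B Bs)
  let ?U = "set (concat Bs)"
  let ?term = "\<lambda>b. F b B * prod_list (map (F b) Bs)"
  have disj: "set B \<inter> ?U = {}"
    using Cons.prems(1) by simp
  have tail: "prod_list (map F0 Bs) = prod_list (map (F b) Bs)" if "b \<in> set B" "b \<in> A" for b
    using Cons.prems(3) disj that by (intro arg_cong[where f = prod_list] map_cong) force+
  have head: "F0 B = F b B" if "b \<in> ?U" "b \<in> A" for b
    using Cons.prems(3)[of B b] disj that by fastforce
  have IH: "D (prod_list (map F0 Bs)) = (\<Sum>b\<in>?U \<inter> A. prod_list (map (F b) Bs))"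
    using Cons by simp
  have "D (prod_list (map F0 (B # Bs))) =
      D (F0 B) * prod_list (map F0 Bs) + F0 B * D (prod_list (map F0 Bs))"
    by (simp add: leibniz)
  also have "\<dots> = (\<Sum>b\<in>set B \<inter> A. ?term b) + (\<Sum>b\<in>?U \<inter> A. ?term b)"
    unfolding Cons.prems(2)[OF list.set_intros(1)] IH sum_distrib_left sum_distrib_right
    using tail head by (intro arg_cong2[where f = "(+)"] sum.cong) fastforce+
  also have "\<dots> = (\<Sum>b\<in>(set B \<union> ?U) \<inter> A. ?term b)"
    using disj \<open>finite A\<close> by (subst sum.union_disjoint[symmetric]) (auto simp: Int_Un_distrib2)
  finally show ?case by simp
qed

section \<open>The structure constants eps and t\<close>

lemma five_eq: "five = {1, 2, 3, 4, 5}"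
  unfolding five_def by auto

lemma eps_nonzeroD: "eps a b c d \<noteq> 0 \<Longrightarrow> distinct [a, b, c, d] \<and> {a, b, c, d} \<subseteq> five"
proof -
  assume "eps a b c d \<noteq> 0"
  then have "{a, b, c, d} \<subseteq> five" "card (set [a, b, c, d]) = length [a, b, c, d]"
    unfolding eps_def by (auto split: if_splits)
  then show ?thesis using card_distinct by blast
qed

lemma tcomp_eq:
  assumes "distinct [a, b, c, d]" "{a, b, c, d} \<subseteq> five"
  shows "five - {a, b, c, d} = {tcomp a b c d}"
proof -
  have "card (five - {a, b, c, d}) = 1"
    using assms distinct_card[OF assms(1)] by (simp add: card_Diff_subset five_eq)
  then obtain t where t: "five - {a, b, c, d} = {t}"
    by (rule card_1_singletonE)
  then show ?thesis
    unfolding tcomp_def by simp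
qed

definition five_perm :: "nat \<Rightarrow> nat \<Rightarrow> nat \<Rightarrow> nat \<Rightarrow> nat \<Rightarrow> nat \<Rightarrow> nat" where
  "five_perm i j k l t = (\<lambda>n. if n = 1 then i else if n = 2 then j else if n = 3 then k
     else if n = 4 then l else if n = 5 then t else n)"

lemma eps_eq_sign:
  "distinct [a, b, c, d] \<Longrightarrow> {a, b, c, d} \<subseteq> five \<Longrightarrow>
    eps a b c d = sign (five_perm a b c d (tcomp a b c d))"
  unfolding eps_def five_perm_def using distinct_card[of "[a, b, c, d]"] by simp

lemma five_perm_permutes:
  assumes "distinct [i, j, k, l, t]" "{i, j, k, l, t} \<subseteq> five"
  shows "five_perm i j k l t permutes five"
proof (rule bij_imp_permutes)
  let ?f = "five_perm i j k l t"
  have five_list: "five = set [1, 2, 3, 4, 5]"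
    by (simp add: five_eq)
  have map_f: "map ?f [1, 2, 3, 4, 5] = [i, j, k, l, t]"
    by (simp add: five_perm_def)
  have "distinct (map ?f [1, 2, 3, 4, 5])"
    using assms(1) by (simp only: map_f)
  then have "inj_on ?f five"
    unfolding five_list distinct_map by simp
  moreover have "?f ` five \<subseteq> five"
    using assms(2) unfolding five_list image_set map_f by simp
  ultimately show "bij_betw ?f five five"
    by (simp add: bij_betw_def endo_inj_surj five_def)
  show "?f x = x" if "x \<notin> five" for x
    using that by (auto simp: five_perm_def five_eq)
qed

lemma permutes_five_distinct_iff:
  assumes "\<sigma> permutes five"
  shows "distinct [\<sigma> a, \<sigma> b, \<sigma> c, \<sigma> d] \<and> {\<sigma> a, \<sigma> b, \<sigma> c, \<sigma> d} \<subseteq> five \<longleftrightarrow>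
    distinct [a, b, c, d] \<and> {a, b, c, d} \<subseteq> five"
  using permutes_inj[OF assms] permutes_in_image[OF assms] by (auto dest: injD)

lemma tcomp_permute:
  assumes \<sigma>: "\<sigma> permutes five" and abcd: "distinct [a, b, c, d]" "{a, b, c, d} \<subseteq> five"
  shows "tcomp (\<sigma> a) (\<sigma> b) (\<sigma> c) (\<sigma> d) = \<sigma> (tcomp a b c d)"
proof -
  have "distinct [\<sigma> a, \<sigma> b, \<sigma> c, \<sigma> d] \<and> {\<sigma> a, \<sigma> b, \<sigma> c, \<sigma> d} \<subseteq> five"
    using permutes_five_distinct_iff[OF \<sigma>] abcd by blast
  then have "{tcomp (\<sigma> a) (\<sigma> b) (\<sigma> c) (\<sigma> d)} = five - {\<sigma> a, \<sigma> b, \<sigma> c, \<sigma> d}"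
    using tcomp_eq by blast
  also have "\<dots> = \<sigma> ` (five - {a, b, c, d})"
    by (simp add: image_set_diff[OF permutes_inj[OF \<sigma>]] permutes_image[OF \<sigma>])
  also have "\<dots> = {\<sigma> (tcomp a b c d)}"
    by (simp add: tcomp_eq[OF abcd])
  finally show ?thesis by simp
qed

lemma five_perm_permute:
  assumes \<sigma>: "\<sigma> permutes five"
  shows "five_perm (\<sigma> a) (\<sigma> b) (\<sigma> c) (\<sigma> d) (\<sigma> t) = \<sigma> \<circ> five_perm a b c d t"
proof
  fix n
  consider "n = 1" | "n = 2" | "n = 3" | "n = 4" | "n = 5" | "n \<notin> five"
    by (auto simp: five_eq)
  then show "five_perm (\<sigma> a) (\<sigma> b) (\<sigma> c) (\<sigma> d) (\<sigma> t) n = (\<sigma> \<circ> five_perm a b c d t) n"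
    by cases (simp_all add: five_perm_def permutes_not_in[OF \<sigma>] five_eq)
qed

lemma eps_permute:
  assumes \<sigma>: "\<sigma> permutes five"
  shows "eps (\<sigma> a) (\<sigma> b) (\<sigma> c) (\<sigma> d) = sign \<sigma> * eps a b c d"
proof (cases "distinct [a, b, c, d] \<and> {a, b, c, d} \<subseteq> five")
  case False
  moreover have "\<not> (distinct [\<sigma> a, \<sigma> b, \<sigma> c, \<sigma> d] \<and> {\<sigma> a, \<sigma> b, \<sigma> c, \<sigma> d} \<subseteq> five)"
    using permutes_five_distinct_iff[OF \<sigma>, of a b c d] False by simp
  ultimately have "eps a b c d = 0" "eps (\<sigma> a) (\<sigma> b) (\<sigma> c) (\<sigma> d) = 0"
    using eps_nonzeroD by (metis, metis)
  then show ?thesis by simp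
next
  case True
  let ?\<pi> = "five_perm a b c d (tcomp a b c d)"
  have "tcomp a b c d \<in> five - {a, b, c, d}"
    using tcomp_eq[of a b c d] True by simp
  then have \<pi>: "?\<pi> permutes five"
    using True by (intro five_perm_permutes) auto
  have \<sigma>_True: "distinct [\<sigma> a, \<sigma> b, \<sigma> c, \<sigma> d]" "{\<sigma> a, \<sigma> b, \<sigma> c, \<sigma> d} \<subseteq> five"
    using permutes_five_distinct_iff[OF \<sigma>, of a b c d] True by simp_all
  have "eps (\<sigma> a) (\<sigma> b) (\<sigma> c) (\<sigma> d) = sign (\<sigma> \<circ> ?\<pi>)"
    unfolding eps_eq_sign[OF \<sigma>_True] tcomp_permute[OF \<sigma> conjunct1[OF True] conjunct2[OF True]]
      five_perm_permute[OF \<sigma>] ..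
  also have "\<dots> = sign \<sigma> * sign ?\<pi>"
    using \<sigma> \<pi> by (intro sign_compose permutes_imp_permutation) (simp_all add: five_def)
  also have "sign ?\<pi> = eps a b c d"
    using True by (simp add: eps_eq_sign)
  finally show ?thesis .
qed

definition subst_letter :: "nat \<Rightarrow> nat \<Rightarrow> nat \<Rightarrow> nat" where
  "subst_letter r s x = (if x = r then s else x)"

text \<open>The bracket [d_ij, d_kl] = eps_ijkl partial_t in U(L); D_{k,l}(I) is a multiple of it.\<close>

definition dd_bracket :: "nat \<Rightarrow> nat \<Rightarrow> nat \<Rightarrow> nat \<Rightarrow> 'k::comm_ring_1 fa" where
  "dd_bracket i j k l = fa_const (of_int (eps i j k l)) * fa_gen (Pd (tcomp i j k l))"

lemma dd_bracket_eq_0: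
  assumes "\<not> distinct [a, b, c, d]"
  shows "dd_bracket a b c d = 0"
proof -
  have "eps a b c d = 0"
    using assms eps_nonzeroD by blast
  then show ?thesis
    by (simp add: dd_bracket_def)
qed

lemma act_dd_bracket:
  "act s r (dd_bracket a b c d) =
    (if tcomp a b c d = s then - (fa_const (of_int (eps a b c d)) * fa_gen (Pd r)) else 0)"
  unfolding dd_bracket_def act_const_times act_fa_gen by (simp add: act_gen_def)

context
  fixes r s :: nat
  assumes r: "r \<in> five" and s: "s \<in> five" and rs: "r \<noteq> s"
begin

lemma dd_bracket_transpose:
  "dd_bracket (transpose r s a) (transpose r s b) (transpose r s c) (transpose r s d) =
    - (fa_const (of_int (eps a b c d)) * fa_gen (Pd (transpose r s (tcomp a b c d))))"
proof (cases "eps a b c d = 0")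
  case True
  then show ?thesis
    using eps_permute[OF permutes_swap_id[OF r s]] by (simp add: dd_bracket_def)
next
  case False
  then show ?thesis
    using eps_permute[OF permutes_swap_id[OF r s]] tcomp_permute[OF permutes_swap_id[OF r s]]
      eps_nonzeroD[OF False] rs
    by (simp add: dd_bracket_def sign_swap_id fa_const_uminus)
qed

lemma act_dd_bracket_without_r:
  assumes "{a, b, c, d} \<subseteq> five" "r \<notin> {a, b, c, d}"
  shows "act s r (dd_bracket a b c d) = (0 :: 'k::comm_ring_1 fa)"
proof -
  have "eps a b c d = 0" if "tcomp a b c d = s"
  proof (rule ccontr)
    assume "eps a b c d \<noteq> 0"
    then have "five - {a, b, c, d} = {s}"
      using tcomp_eq[of a b c d] eps_nonzeroD[of a b c d] that by simp
    moreover have "r \<in> five - {a, b, c, d}"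
      using assms r by simp
    ultimately show False
      using rs by simp
  qed
  then show ?thesis
    by (simp add: act_dd_bracket)
qed

text \<open>If t = s, the substitution of s for r acts on the four letters as the transposition (r s);
  otherwise s is among them and the substitution repeats a letter, so both sides vanish.\<close>

lemma act_dd_bracket_with_r:
  assumes abcd: "{a, b, c, d} \<subseteq> five" and "r \<in> {a, b, c, d}"
  shows "act s r (dd_bracket a b c d) =
    (dd_bracket (subst_letter r s a) (subst_letter r s b) (subst_letter r s c) (subst_letter r s d)
      :: 'k::comm_ring_1 fa)"
proof (cases "distinct [a, b, c, d] \<and> tcomp a b c d = s")
  case True
  then have "s \<in> five - {a, b, c, d}"
    using tcomp_eq[of a b c d] abcd by simp
  then have "s \<notin> {a, b, c, d}"
    by simp
  then have "subst_letter r s x = transpose r s x" if "x \<in> {a, b, c, d}" for x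
    using that by (auto simp: subst_letter_def transpose_def)
  then have "dd_bracket (subst_letter r s a) (subst_letter r s b) (subst_letter r s c) (subst_letter r s d)
      = dd_bracket (transpose r s a) (transpose r s b) (transpose r s c) (transpose r s d)"
    by simp
  also have "\<dots> = - (fa_const (of_int (eps a b c d)) * fa_gen (Pd (transpose r s (tcomp a b c d))))"
    by (rule dd_bracket_transpose)
  also have "\<dots> = act s r (dd_bracket a b c d)"
    using True by (simp add: act_dd_bracket)
  finally show ?thesis ..
next
  case False
  have "\<not> distinct (map (subst_letter r s) [a, b, c, d])"
  proof (cases "distinct [a, b, c, d]")
    case True
    then have "five - {a, b, c, d} = {tcomp a b c d}" "tcomp a b c d \<noteq> s"
      using False tcomp_eq abcd by simp_all
    then have "s \<in> {a, b, c, d}"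
      using s by (metis Diff_iff singletonD)
    moreover have "subst_letter r s r = subst_letter r s s"
      by (simp add: subst_letter_def)
    ultimately have "\<not> inj_on (subst_letter r s) (set [a, b, c, d])"
      using assms(2) rs inj_onD[of "subst_letter r s" "set [a, b, c, d]" r s] by auto
    then show ?thesis
      by (simp only: distinct_map) simp
  next
    case False
    then show ?thesis
      by (simp only: distinct_map) simp
  qed
  then have "dd_bracket (subst_letter r s a) (subst_letter r s b) (subst_letter r s c) (subst_letter r s d)
      = (0 :: 'k fa)"
    by (intro dd_bracket_eq_0) simp
  moreover have "eps a b c d = 0 \<or> tcomp a b c d \<noteq> s"
    using False eps_nonzeroD by blast
  then have "act s r (dd_bracket a b c d) = (0 :: 'k fa)"
    by (auto simp: act_dd_bracket)
  ultimately show ?thesis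
    by simp
qed

text \<open>Here r occurs twice, so the left side vanishes; the two brackets on the right cancel, as the
  second is obtained from the first by the transposition (r s).\<close>

lemma act_dd_bracket_two_r:
  assumes ab: "(a = r) \<noteq> (b = r)" and cd: "(c = r) \<noteq> (d = r)"
  shows "act s r (dd_bracket a b c d) =
    (dd_bracket (subst_letter r s a) (subst_letter r s b) c d +
      dd_bracket a b (subst_letter r s c) (subst_letter r s d) :: 'k::comm_ring_1 fa)"
proof -
  let ?a = "subst_letter r s a" and ?b = "subst_letter r s b"
  let ?c = "subst_letter r s c" and ?d = "subst_letter r s d"
  have "\<not> distinct [a, b, c, d]"
    using ab cd by auto
  then have "act s r (dd_bracket a b c d) = (0 :: 'k fa)"
    by (simp add: dd_bracket_eq_0)
  moreover have "dd_bracket ?a ?b c d + dd_bracket a b ?c ?d = (0 :: 'k fa)"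
  proof (cases "s \<in> {a, b, c, d}")
    case True
    then have "\<not> distinct [?a, ?b, c, d]" "\<not> distinct [a, b, ?c, ?d]"
      using ab cd rs by (auto simp: subst_letter_def)
    then show ?thesis
      by (simp add: dd_bracket_eq_0)
  next
    case False
    have "transpose r s ?a = a" "transpose r s ?b = b" "transpose r s c = ?c" "transpose r s d = ?d"
      using False by (auto simp: subst_letter_def transpose_def)
    then have "dd_bracket a b ?c ?d =
        - (fa_const (of_int (eps ?a ?b c d)) * fa_gen (Pd (transpose r s (tcomp ?a ?b c d))) :: 'k fa)"
      using dd_bracket_transpose[of ?a ?b c d] by simp
    moreover have "transpose r s (tcomp ?a ?b c d) = tcomp ?a ?b c d" if "eps ?a ?b c d \<noteq> 0"
    proof -
      have "tcomp ?a ?b c d \<in> five - {?a, ?b, c, d}"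
        using tcomp_eq eps_nonzeroD[OF that] by blast
      moreover have "r \<in> {?a, ?b, c, d}" "s \<in> {?a, ?b, c, d}"
        using ab cd by (auto simp: subst_letter_def)
      ultimately show ?thesis
        by (auto simp: transpose_def)
    qed
    ultimately show ?thesis
      by (cases "eps ?a ?b c d = 0") (simp_all add: dd_bracket_def)
  qed
  ultimately show ?thesis
    by simp
qed

end

section \<open>The summands of omega_I as products over blocks\<close>

lemma SIF_finite: "S \<in> SIF d \<Longrightarrow> finite S"
  by (rule finite_subset[of _ "Pow {1..d}"]) (auto simp: SIF_def)

lemma SIF_pair:
  assumes "S \<in> SIF d" "P \<in> S"
  shows "{Min P, Max P} = P" "Min P < Max P" "P \<subseteq> {1..d}"
proof -
  have "card P = 2"
    using assms by (auto simp: SIF_def)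
  then obtain x y where "P = {x, y}" "x \<noteq> y"
    by (meson card_2_iff)
  then show "{Min P, Max P} = P" "Min P < Max P"
    by (auto simp: min_def max_def)
  show "P \<subseteq> {1..d}"
    using assms by (auto simp: SIF_def)
qed

lemma SIF_disjoint: "S \<in> SIF d \<Longrightarrow> P \<in> S \<Longrightarrow> Q \<in> S \<Longrightarrow> P \<noteq> Q \<Longrightarrow> P \<inter> Q = {}"
  by (auto simp: SIF_def)

lemma inj_on_Min_SIF:
  assumes "S \<in> SIF d"
  shows "inj_on Min S"
proof
  fix P Q assume "P \<in> S" "Q \<in> S" "Min P = Min Q"
  then have "Min P \<in> P \<inter> Q"
    using SIF_pair(1)[OF assms] by (metis Int_iff insertI1)
  then show "P = Q"
    using SIF_disjoint[OF assms \<open>P \<in> S\<close> \<open>Q \<in> S\<close>] by blast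
qed

fun block_factor :: "(nat \<times> nat) list \<Rightarrow> nat list \<Rightarrow> 'k::field fa" where
  "block_factor J [k] = fa_gen (Dd (fst (J ! (k - 1))) (snd (J ! (k - 1))))"
| "block_factor J [k, l] = Dpair J k l"
| "block_factor J _ = 1"

lemma block_factor_cong:
  "(\<And>k. k \<in> set B \<Longrightarrow> J ! (k - 1) = J' ! (k - 1)) \<Longrightarrow> block_factor J B = block_factor J' B"
  by (induction J B rule: block_factor.induct) (simp_all add: Dpair_def)

text \<open>The positions of the factors of D_S(J) d_{C_S(J)}, in the order in which \<open>DS\<close> and \<open>CS\<close>
  multiply them: the pairs of S by increasing smaller element, then the positions outside S.\<close>

definition pairs_by_min :: "nat set set \<Rightarrow> nat set list" where
  "pairs_by_min S = map (the_inv_into S Min) (sorted_list_of_set (Min ` S))"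

definition factor_blocks :: "nat \<Rightarrow> nat set set \<Rightarrow> nat list list" where
  "factor_blocks d S =
     map (\<lambda>P. [Min P, Max P]) (pairs_by_min S) @ map (\<lambda>k. [k]) (filter (\<lambda>k. k \<notin> \<Union>S) [1..<Suc d])"

lemma foldr_fa_mult_eq_prod_list: "foldr fa_mult xs fa_one = prod_list xs"
  by (induction xs) (simp_all add: fa_mult_eq_times fa_one_eq_one)

lemma omega_summand_eq_prod_blocks:
  "DS J S * dI (CS J S) =
    (prod_list (map (block_factor J) (factor_blocks (length J) S)) :: 'k::field fa)"
  by (simp add: DS_def CS_def dI_def factor_blocks_def pairs_by_min_def the_inv_into_def fa_word_eq_prod_list
      foldr_fa_mult_eq_prod_list Let_def comp_def split_beta)

lemma distinct_pairs_by_min: "S \<in> SIF d \<Longrightarrow> distinct (pairs_by_min S)"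
  using inj_on_the_inv_into[OF inj_on_Min_SIF] SIF_finite by (simp add: pairs_by_min_def distinct_map)

lemma set_pairs_by_min: "S \<in> SIF d \<Longrightarrow> set (pairs_by_min S) = S"
  using the_inv_into_onto[OF inj_on_Min_SIF] SIF_finite by (simp add: pairs_by_min_def)

lemma distinct_concat_pairs_by_min:
  assumes S: "S \<in> SIF d"
  shows "distinct (concat (map (\<lambda>P. [Min P, Max P]) (pairs_by_min S)))"
proof (rule distinct_concat)
  have set_pair: "set [Min P, Max P] = P" if "P \<in> S" for P
    using SIF_pair(1)[OF S that] by simp
  have "inj_on (\<lambda>P. [Min P, Max P]) S"
    by (rule inj_onI) (metis set_pair)
  then show "distinct (map (\<lambda>P. [Min P, Max P]) (pairs_by_min S))"
    using distinct_pairs_by_min[OF S] set_pairs_by_min[OF S] by (simp add: distinct_map)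
  fix ys zs
  assume ys: "ys \<in> set (map (\<lambda>P. [Min P, Max P]) (pairs_by_min S))"
  then show "distinct ys"
    using set_pairs_by_min[OF S] SIF_pair(2)[OF S] by fastforce
  assume "zs \<in> set (map (\<lambda>P. [Min P, Max P]) (pairs_by_min S))" "ys \<noteq> zs"
  then obtain P Q where "P \<in> S" "Q \<in> S" "P \<noteq> Q" "ys = [Min P, Max P]" "zs = [Min Q, Max Q]"
    using ys set_pairs_by_min[OF S] by auto
  then show "set ys \<inter> set zs = {}"
    using SIF_disjoint[OF S] set_pair by simp
qed

lemma factor_blocks_partition:
  assumes S: "S \<in> SIF d"
  shows "distinct (concat (factor_blocks d S))" "set (concat (factor_blocks d S)) = {1..d}"
proof -
  have "set (concat (map (\<lambda>P. [Min P, Max P]) (pairs_by_min S))) = \<Union>S"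
    using set_pairs_by_min[OF S] SIF_pair(1)[OF S] by auto
  moreover have "\<Union>S \<subseteq> {1..d}"
    using SIF_pair(3)[OF S] by blast
  ultimately show "distinct (concat (factor_blocks d S))" "set (concat (factor_blocks d S)) = {1..d}"
    using distinct_concat_pairs_by_min[OF S] by (auto simp: factor_blocks_def)
qed

lemma factor_blocks_shape:
  assumes S: "S \<in> SIF d" and "B \<in> set (factor_blocks d S)"
  shows "(\<exists>k. B = [k]) \<or> (\<exists>k l. B = [k, l] \<and> k < l)"
  using assms(2) set_pairs_by_min[OF S] SIF_pair(2)[OF S] by (auto simp: factor_blocks_def)

section \<open>The action on omega_I\<close>

lemma length_repl [simp]: "length (repl I b s r) = length I"
  by (simp add: repl_def)

lemma repl_nth_other: "k \<noteq> b - 1 \<Longrightarrow> repl I b s r ! k = I ! k"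
  by (simp add: repl_def)

lemma repl_nth_same:
  "b - 1 < length I \<Longrightarrow>
    repl I b s r ! (b - 1) = (subst_letter r s (fst (I ! (b - 1))), subst_letter r s (snd (I ! (b - 1))))"
  by (simp add: repl_def subst_letter_def split_beta)

lemma Dpair_eq_dd_bracket:
  "Dpair J k l = fa_const (1 / 2 * (-1) ^ (k + l)) *
     dd_bracket (fst (J ! (k - 1))) (snd (J ! (k - 1))) (fst (J ! (l - 1))) (snd (J ! (l - 1)))"
  unfolding Dpair_def dd_bracket_def fa_smul_eq_const_times mult.assoc[symmetric] fa_const_mult
  by (simp add: split_beta)

context
  fixes I :: "(nat \<times> nat) list" and r s c :: nat
  assumes letters: "\<forall>p\<in>set I. fst p \<in> five \<and> snd p \<in> five"
    and r: "r \<in> five" and s: "s \<in> five" and rs: "r \<noteq> s"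
    and c: "c \<le> length I"
    and r_once: "\<forall>b\<in>{1..c}. (fst (I ! (b - 1)) = r) \<noteq> (snd (I ! (b - 1)) = r)"
    and r_absent: "\<forall>b\<in>{c+1..length I}. fst (I ! (b - 1)) \<noteq> r \<and> snd (I ! (b - 1)) \<noteq> r"
begin

lemma act_block_single:
  assumes k: "k \<in> {1..length I}"
  shows "act s r (block_factor I [k]) = (\<Sum>b\<in>{k} \<inter> {1..c}. block_factor (repl I b s r) [k] :: 'k::field fa)"
proof (cases "k \<le> c")
  case True
  then have "(fst (I ! (k - 1)) = r) \<noteq> (snd (I ! (k - 1)) = r)"
    using r_once k by simp
  then show ?thesis
    using True k repl_nth_same[of k I s r]
    by (auto simp: act_fa_gen act_gen_def subst_letter_def)
next
  case False
  then show ?thesis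
    using r_absent k by (simp add: act_fa_gen act_gen_def)
qed

lemma act_block_pair:
  assumes kl: "k < l" and k: "k \<in> {1..length I}" and l: "l \<in> {1..length I}"
  shows "act s r (block_factor I [k, l]) =
    (\<Sum>b\<in>{k, l} \<inter> {1..c}. block_factor (repl I b s r) [k, l] :: 'k::field fa)"
proof -
  obtain a b x y where ab: "I ! (k - 1) = (a, b)" and xy: "I ! (l - 1) = (x, y)"
    by fastforce
  have "I ! (k - 1) \<in> set I" "I ! (l - 1) \<in> set I"
    using k l by auto
  then have abxy: "{a, b, x, y} \<subseteq> five"
    using letters ab xy by force
  let ?\<alpha> = "fa_const (1 / 2 * (-1) ^ (k + l)) :: 'k fa"
  have "k - 1 \<noteq> l - 1" "k - 1 < length I" "l - 1 < length I"
    using kl k l by auto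
  then have at_k: "Dpair (repl I k s r) k l =
      ?\<alpha> * dd_bracket (subst_letter r s a) (subst_letter r s b) x y"
    and at_l: "Dpair (repl I l s r) k l =
      ?\<alpha> * dd_bracket a b (subst_letter r s x) (subst_letter r s y)"
    using repl_nth_same[of k I s r] repl_nth_other[of "l - 1" k I s r]
      repl_nth_same[of l I s r] repl_nth_other[of "k - 1" l I s r] ab xy
    by (simp_all add: Dpair_eq_dd_bracket)
  have act_I: "act s r (Dpair I k l) = ?\<alpha> * act s r (dd_bracket a b x y)"
    using ab xy by (simp add: Dpair_eq_dd_bracket act_const_times)
  consider (both) "l \<le> c" | (first) "k \<le> c" "\<not> l \<le> c" | (none) "\<not> k \<le> c"
    using kl by linarith
  then show ?thesis
  proof cases
    case both
    then have "{k, l} \<inter> {1..c} = {k, l}"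
      using k l kl by auto
    moreover have "(a = r) \<noteq> (b = r)" "(x = r) \<noteq> (y = r)"
      using r_once[rule_format, of k] r_once[rule_format, of l] both k l kl ab xy by auto
    ultimately show ?thesis
      using kl by (simp add: act_I at_k at_l act_dd_bracket_two_r[OF r s rs] distrib_left)
  next
    case first
    then have "{k, l} \<inter> {1..c} = {k}"
      using k l kl by auto
    moreover have "(a = r) \<noteq> (b = r)"
      using r_once[rule_format, of k] first k ab by auto
    then have "r \<in> {a, b, x, y}"
      by auto
    moreover have "subst_letter r s x = x" "subst_letter r s y = y"
      using r_absent[rule_format, of l] first l xy by (auto simp: subst_letter_def)
    ultimately show ?thesis
      by (simp add: act_I at_k act_dd_bracket_with_r[OF r s rs abxy])
  next
    case none
    then have "{k, l} \<inter> {1..c} = {}"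
      using kl by auto
    moreover have "r \<notin> {a, b, x, y}"
      using r_absent[rule_format, of k] r_absent[rule_format, of l] none k l kl ab xy by auto
    ultimately show ?thesis
      by (simp add: act_I act_dd_bracket_without_r[OF r s rs abxy])
  qed
qed

lemma act_omega_summand:
  assumes S: "S \<in> SIF (length I)"
  shows "act s r (DS I S * dI (CS I S)) =
    (\<Sum>b=1..c. DS (repl I b s r) S * dI (CS (repl I b s r) S) :: 'k::field fa)"
proof -
  let ?Bs = "factor_blocks (length I) S"
  note blocks = factor_blocks_partition[OF S]
  have B_range: "set B \<subseteq> {1..length I}" if "B \<in> set ?Bs" for B
    using that blocks(2) by auto
  have "act s r (prod_list (map (block_factor I) ?Bs)) =
      (\<Sum>b\<in>set (concat ?Bs) \<inter> {1..c}. prod_list (map (block_factor (repl I b s r)) ?Bs) :: 'k fa)"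
  proof (rule derivation_prod_list_blocks[where F = "\<lambda>b. block_factor (repl I b s r)",
        OF act_times finite_atLeastAtMost blocks(1)])
    fix B assume B: "B \<in> set ?Bs"
    from factor_blocks_shape[OF S B]
    show "act s r (block_factor I B) = (\<Sum>b\<in>set B \<inter> {1..c}. block_factor (repl I b s r) B)"
    proof (elim disjE exE conjE)
      fix k assume "B = [k]"
      then show ?thesis
        using B_range[OF B] act_block_single[of k] by simp
    next
      fix k l assume "B = [k, l]" "k < l"
      then show ?thesis
        using B_range[OF B] act_block_pair[of k l] by simp
    qed
  next
    fix B b assume B: "B \<in> set ?Bs" and b: "b \<in> {1..c}" "b \<notin> set B"
    have "repl I b s r ! (k - 1) = I ! (k - 1)" if "k \<in> set B" for k
    proof (rule repl_nth_other)
      have "1 \<le> k" "k \<noteq> b"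
        using that B_range[OF B] b by auto
      then show "k - 1 \<noteq> b - 1"
        using b(1) by auto
    qed
    then show "block_factor (repl I b s r) B = block_factor I B"
      by (rule block_factor_cong)
  qed
  moreover have "set (concat ?Bs) \<inter> {1..c} = {1..c}"
    using blocks(2) c by auto
  ultimately show ?thesis
    by (simp add: omega_summand_eq_prod_blocks)
qed

lemma act_omega: "act s r (omega I) = (\<Sum>b=1..c. omega (repl I b s r) :: 'k::field fa)"
proof -
  have "act s r (omega I) =
      (\<Sum>S\<in>SIF (length I). fa_const ((-1) ^ ncross S) * act s r (DS I S * dI (CS I S)) :: 'k fa)"
    by (simp add: omega_def fa_smul_eq_const_times fa_mult_eq_times act_sum act_const_times)
  also have "\<dots> = (\<Sum>S\<in>SIF (length I). \<Sum>b=1..c.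
      fa_const ((-1) ^ ncross S) * (DS (repl I b s r) S * dI (CS (repl I b s r) S)))"
    by (simp add: act_omega_summand sum_distrib_left)
  also have "\<dots> = (\<Sum>b=1..c. omega (repl I b s r))"
    unfolding omega_def fa_smul_eq_const_times fa_mult_eq_times length_repl by (rule sum.swap)
  finally show ?thesis .
qed

end

theorem theorem5p8:
  fixes I :: "(nat \<times> nat) list" and r s c :: nat
  assumes "\<forall>p\<in>set I. fst p \<in> five \<and> snd p \<in> five"
    and "r \<in> five" and "s \<in> five" and "r \<noteq> s"
    and "c \<le> length I"
    and "\<forall>b\<in>{1..c}. (fst (I ! (b - 1)) = r) \<noteq> (snd (I ! (b - 1)) = r)"
    and "\<forall>b\<in>{c+1..length I}. fst (I ! (b - 1)) \<noteq> r \<and> snd (I ! (b - 1)) \<noteq> r"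
  shows "ueq (act s r (omega I :: 'k::field_char_0 fa)) (\<Sum>b=1..c. omega (repl I b s r))"
  unfolding ueq_def act_omega[OF assms] by (simp add: rel_ideal.zero)

end
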